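(* We have \[ \mathrm{Com}^{\mathrm{TKK}}(L(2)\otimes B)\cong L(0)\oplus L(2)\otimes B\oplus (L(0)\otimes S^2(B)\oplus L(2)\otimes\Lambda^2(B)) \oplus L(0)\otimes \Lambda^3(B), \] where each product of more than three generators from $L(2)\otimes B$ vanishes, and products of two or three generators are given, respectively, by the map \[ S^2(L(2)\otimes B)\to L(0)\otimes S^2(B)\oplus L(2)\otimes \Lambda^2(B) \] sending $(u_1\otimes b_1)(u_2\otimes b_2)$ to $K(u_1,u_2)\otimes (b_1b_2)+[u_1,u_2]\otimes(b_1\wedge b_2)$ and by the map \[ S^3(L(2)\otimes B)\to L(0)\otimes \Lambda^3(B) \] sending $(u_1\otimes b_1)(u_2\otimes b_2)(u_3\otimes b_3)$ to $K([u_1,u_2],u_3)\otimes (b_1\wedge b_2\wedge b_3)$.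
   Context: We work over a field $k$ of characteristic zero. For $n\ge 0$, $L(n)$ denotes the irreducible $\mathfrak{sl}_2$-module of highest weight $n$; $L(0)$ is the trivial module and $L(2)$ is the adjoint module $\mathfrak{sl}_2$ with basis $e,f,h$. $K$ is the Killing form of $\mathfrak{sl}_2$ normalised so that its nonzero values are $K(e,f)=K(f,e)=\frac12$, $K(h,h)=1$. The category $\mathrm{TKK}$ has as objects the completely reducible $\mathfrak{sl}_2$-modules that are direct sums of copies of $L(0)$ and $L(2)$, and as morphisms $\mathfrak{sl}_2$-module maps. $B$ is a (finite-dimensional) vector space, and $\mathrm{Com}^{\mathrm{TKK}}(L(2)\otimes B)$ is the free unital commutative associative algebra in $\mathrm{TKK}$ generated by $L(2)\otimes B$, i.e. the quotient of the symmetric algebra $S(L(2)\otimes B)$ by the ideal generated by all isotypic components $L(m)$, $m\neq 0,2$ (equivalently, by the $\mathfrak{sl}_2$-submodule of $S^2(L(2)\otimes B)$ generated by $S^2(e\otimes B)$). *)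

theory Defs
  imports Main "HOL-Library.Poly_Mapping"
begin

datatype sl2b = E | F | H

text \<open>Structure constants: the bracket of basis elements X, Y, as coefficient of basis element Z.
  [e,f] = h, [h,e] = 2e, [h,f] = -2f.\<close>
fun brk :: "sl2b \<Rightarrow> sl2b \<Rightarrow> sl2b \<Rightarrow> 'k::field_char_0" where
  "brk E F Z = (if Z = H then 1 else 0)"
| "brk F E Z = (if Z = H then -1 else 0)"
| "brk H E Z = (if Z = E then 2 else 0)"
| "brk E H Z = (if Z = E then -2 else 0)"
| "brk H F Z = (if Z = F then -2 else 0)"
| "brk F H Z = (if Z = F then 2 else 0)"
| "brk _ _ _ = 0"

text \<open>Normalised Killing form: K(e,f) = K(f,e) = 1/2, K(h,h) = 1, all other basis values 0.\<close>
fun Kf :: "sl2b \<Rightarrow> sl2b \<Rightarrow> 'k::field_char_0" where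
  "Kf E F = 1/2"
| "Kf F E = 1/2"
| "Kf H H = 1"
| "Kf _ _ = 0"

definition Kbr :: "sl2b \<Rightarrow> sl2b \<Rightarrow> sl2b \<Rightarrow> 'k::field_char_0" where
  "Kbr X Y Z = (\<Sum>C\<in>UNIV. brk X Y C * Kf C Z)"

text \<open>B is the vector space with basis indexed by the finite type 'b.
  L(2) \<otimes> B has basis X \<otimes> b_i, indexed by sl2b \<times> 'b; the symmetric algebra is the
  polynomial ring in these variables, represented via Poly_Mapping.\<close>

type_synonym ('b, 'k) spoly = "((sl2b \<times> 'b) \<Rightarrow>\<^sub>0 nat) \<Rightarrow>\<^sub>0 'k"

definition Const :: "'k::field_char_0 \<Rightarrow> ('b, 'k) spoly" where
  "Const c = Poly_Mapping.single 0 c"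

definition Var :: "sl2b \<times> 'b \<Rightarrow> ('b, 'k::field_char_0) spoly" where
  "Var v = Poly_Mapping.single (Poly_Mapping.single v 1) 1"

definition Mon :: "((sl2b \<times> 'b) \<Rightarrow>\<^sub>0 nat) \<Rightarrow> ('b, 'k::field_char_0) spoly" where
  "Mon m = Poly_Mapping.single m 1"

definition adVar :: "sl2b \<Rightarrow> sl2b \<times> 'b \<Rightarrow> ('b, 'k::field_char_0) spoly" where
  "adVar X v = (\<Sum>C\<in>UNIV. Const (brk X (fst v) C) * Var (C, snd v))"

text \<open>Action of X on S(L(2) \<otimes> B): the unique derivation extending adVar.\<close>
definition act :: "sl2b \<Rightarrow> ('b, 'k::field_char_0) spoly \<Rightarrow> ('b, 'k) spoly" where
  "act X (p :: ('b, 'k) spoly) = (\<Sum>m\<in>Poly_Mapping.keys p. \<Sum>v\<in>Poly_Mapping.keys m.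
      Const (Poly_Mapping.lookup p m * (of_nat (Poly_Mapping.lookup m v) :: 'k)) * Mon (m - Poly_Mapping.single v 1) * adVar X v)"

inductive_set tkk_rel_module :: "('b, 'k::field_char_0) spoly set" where
  gen: "Var (E, i) * Var (E, j) \<in> tkk_rel_module"
| act: "p \<in> tkk_rel_module \<Longrightarrow> act X p \<in> tkk_rel_module"
| zero: "0 \<in> tkk_rel_module"
| add: "p \<in> tkk_rel_module \<Longrightarrow> q \<in> tkk_rel_module \<Longrightarrow> p + q \<in> tkk_rel_module"
| smult: "p \<in> tkk_rel_module \<Longrightarrow> Const c * p \<in> tkk_rel_module"

inductive_set ideal_gen :: "'a::comm_ring_1 set \<Rightarrow> 'a set" for G where
  gen: "g \<in> G \<Longrightarrow> g \<in> ideal_gen G"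
| zero: "0 \<in> ideal_gen G"
| add: "p \<in> ideal_gen G \<Longrightarrow> q \<in> ideal_gen G \<Longrightarrow> p + q \<in> ideal_gen G"
| mult: "p \<in> ideal_gen G \<Longrightarrow> r * p \<in> ideal_gen G"

text \<open>The ideal defining Com^TKK(L(2) \<otimes> B) = S(L(2) \<otimes> B) / tkk_ideal.\<close>
definition tkk_ideal :: "('b, 'k::field_char_0) spoly set" where
  "tkk_ideal = ideal_gen tkk_rel_module"

text \<open>Coordinates: W0 (L(0)), W1 X i (L(2)\<otimes>B), W2S i j (S^2 B as symmetric tensors),
  W2A X i j (L(2) \<otimes> \<Lambda>^2 B, antisymmetric tensors), W3 i j l (\<Lambda>^3 B, alternating tensors).\<close>
datatype 'b widx = W0 | W1 sl2b 'b | W2S 'b 'b | W2A sl2b 'b 'b | W3 'b 'b 'b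

type_synonym ('b, 'k) wvec = "'b widx \<Rightarrow> 'k"

definition Wspace :: "('b, 'k::field_char_0) wvec set" where
  "Wspace = {w. (\<forall>i j. w (W2S i j) = w (W2S j i))
              \<and> (\<forall>X i j. w (W2A X i j) = - w (W2A X j i))
              \<and> (\<forall>i j l. w (W3 i j l) = - w (W3 j i l) \<and> w (W3 i j l) = - w (W3 i l j))}"

definition dlt :: "'b \<Rightarrow> 'b \<Rightarrow> 'k::field_char_0" where
  "dlt i j = (if i = j then 1 else 0)"

text \<open>b1 b2 in S^2 B, as symmetric tensor (b1 \<otimes> b2 + b2 \<otimes> b1)/2.\<close>
definition symt :: "'b \<Rightarrow> 'b \<Rightarrow> 'b \<Rightarrow> 'b \<Rightarrow> 'k::field_char_0" where
  "symt b1 b2 i j = (dlt b1 i * dlt b2 j + dlt b2 i * dlt b1 j) / 2"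

text \<open>b1 \<wedge> b2, as antisymmetric tensor b1 \<otimes> b2 - b2 \<otimes> b1.\<close>
definition wedge2 :: "'b \<Rightarrow> 'b \<Rightarrow> 'b \<Rightarrow> 'b \<Rightarrow> 'k::field_char_0" where
  "wedge2 b1 b2 i j = dlt b1 i * dlt b2 j - dlt b2 i * dlt b1 j"

definition wedge3 :: "'b \<Rightarrow> 'b \<Rightarrow> 'b \<Rightarrow> 'b \<Rightarrow> 'b \<Rightarrow> 'b \<Rightarrow> 'k::field_char_0" where
  "wedge3 b1 b2 b3 i j l =
     dlt b1 i * dlt b2 j * dlt b3 l + dlt b2 i * dlt b3 j * dlt b1 l + dlt b3 i * dlt b1 j * dlt b2 l
   - dlt b2 i * dlt b1 j * dlt b3 l - dlt b1 i * dlt b3 j * dlt b2 l - dlt b3 i * dlt b2 j * dlt b1 l"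

definition vars_list :: "((sl2b \<times> 'b) \<Rightarrow>\<^sub>0 nat) \<Rightarrow> (sl2b \<times> 'b) list" where
  "vars_list m = (SOME xs. sum_list (map (\<lambda>v. Poly_Mapping.single v 1) xs) = m)"

fun phi_list :: "(sl2b \<times> 'b) list \<Rightarrow> ('b, 'k::field_char_0) wvec" where
  "phi_list [] = (\<lambda>w. if w = W0 then 1 else 0)"
| "phi_list [(u, b)] = (\<lambda>w. if w = W1 u b then 1 else 0)"
| "phi_list [(u1, b1), (u2, b2)] = (\<lambda>w. case w of
      W2S i j \<Rightarrow> Kf u1 u2 * symt b1 b2 i j
    | W2A C i j \<Rightarrow> brk u1 u2 C * wedge2 b1 b2 i j
    | _ \<Rightarrow> 0)"
| "phi_list [(u1, b1), (u2, b2), (u3, b3)] = (\<lambda>w. case w of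
      W3 i j l \<Rightarrow> Kbr u1 u2 u3 * wedge3 b1 b2 b3 i j l
    | _ \<Rightarrow> 0)"
| "phi_list _ = (\<lambda>w. 0)"

definition phi :: "('b, 'k::field_char_0) spoly \<Rightarrow> ('b, 'k) wvec" where
  "phi p = (\<lambda>w. \<Sum>m\<in>Poly_Mapping.keys p. Poly_Mapping.lookup p m * phi_list (vars_list m) w)"

end

(*
  The sl2-module generated by the relations e_i e_j is the copy of L(4) spanned by the weight
  vectors f^k/k! (e_i e_j), k = 0..4.  The map phi kills every multiple of these weight vectors:
  in degrees 2 and 3 this is a direct computation, and in degree at least 4 phi vanishes anyway.
  Hence the ideal lies in the kernel.

  Conversely, phi_section is an explicit linear right inverse of phi on Wspace, which gives the
  image, and every polynomial p is congruent to phi_section (phi p) modulo the ideal.  For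
  products of two or three generators the difference is an explicit combination of multiples of
  the weight vectors.  Among the labels e, f, h of four generators two coincide, so a product of
  four generators contains a cubic factor with K([u1,u2],u3) = 0, and such a cubic factor lies
  in the ideal.
*)
theory Submission
  imports Defs "HOL-Library.Multiset"
begin


lemma UNIV_sl2b: "(UNIV :: sl2b set) = {E, F, H}"
  using sl2b.exhaust by auto

instance sl2b :: finite
  by standard (simp add: UNIV_sl2b)

lemma sum_UNIV_sl2b: "(\<Sum>C\<in>UNIV. g C) = g E + g F + g H"
  by (simp add: UNIV_sl2b add.assoc)

lemma Kf_commute: "Kf Y X = (Kf X Y :: 'k::field_char_0)"
  by (cases X; cases Y; simp)

lemma brk_anticommute: "brk Y X C = - (brk X Y C :: 'k::field_char_0)"
  by (cases X; cases Y; cases C; simp)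

lemma Kbr_swap12: "Kbr Y X Z = - (Kbr X Y Z :: 'k::field_char_0)"
  by (cases X; cases Y; cases Z; simp add: Kbr_def sum_UNIV_sl2b)

lemma Kbr_swap23: "Kbr X Z Y = - (Kbr X Y Z :: 'k::field_char_0)"
  by (cases X; cases Y; cases Z; simp add: Kbr_def sum_UNIV_sl2b)

lemma Kbr_simps [simp]:
  "Kbr E F H = (1 :: 'k::field_char_0)" "Kbr F H E = (1 :: 'k)" "Kbr H E F = (1 :: 'k)"
  "Kbr F E H = (-1 :: 'k)" "Kbr E H F = (-1 :: 'k)" "Kbr H F E = (-1 :: 'k)"
  "Kbr X X Z = (0 :: 'k)" "Kbr X Z X = (0 :: 'k)" "Kbr Z X X = (0 :: 'k)"
  by (cases X; cases Z; simp add: Kbr_def sum_UNIV_sl2b)+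

lemma Const_0 [simp]: "Const 0 = 0"
  and Const_1 [simp]: "Const 1 = 1"
  and Const_numeral [simp]: "Const (numeral n) = numeral n"
  and Const_add: "Const (a + b) = Const a + Const b"
  and Const_mult: "Const (a * b) = Const a * Const b"
  and Const_uminus: "Const (- a) = - Const a"
  and Const_diff: "Const (a - b) = Const a - Const b"
  by (simp_all add: Const_def single_add mult_single single_uminus single_diff)

lemma Const_mult_single: "Const c * Poly_Mapping.single m d = Poly_Mapping.single m (c * d)"
  by (simp add: Const_def mult_single)

lemma Const_inverse_mult_cancel: "Const (1 / numeral n) * (numeral n * p) = (p :: ('b, 'k::field_char_0) spoly)"
proof -
  have "Const (1 / numeral n) * numeral n = (Const (1 / numeral n * numeral n) :: ('b, 'k) spoly)"
    by (simp only: Const_mult Const_numeral)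
  then show ?thesis
    by (simp add: mult.assoc[symmetric])
qed

lemma single_eq_Const_mult_Mon: "Poly_Mapping.single m c = Const c * Mon m"
  by (simp add: Mon_def Const_mult_single)

lemma Mon_0: "Mon 0 = 1"
  and Mon_add: "Mon (m + n) = Mon m * Mon n"
  and Mon_single: "Mon (Poly_Mapping.single v 1) = Var v"
  by (simp_all add: Mon_def Var_def mult_single)

lemma poly_mapping_expansion:
  "p = (\<Sum>m\<in>Poly_Mapping.keys p. Poly_Mapping.single m (Poly_Mapping.lookup p m))"
  by (rule poly_mapping_eqI) (simp add: lookup_sum lookup_single when_def in_keys_iff)

lemma poly_mapping_induct [case_names zero single add]:
  fixes p :: "'a \<Rightarrow>\<^sub>0 'c::comm_monoid_add"
  assumes "P 0" "\<And>m c. P (Poly_Mapping.single m c)" "\<And>p q. P p \<Longrightarrow> P q \<Longrightarrow> P (p + q)"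
  shows "P p"
proof -
  have "P (\<Sum>m\<in>S. Poly_Mapping.single m (Poly_Mapping.lookup p m))" if "finite S" for S
    using that by (induct S rule: finite_induct) (simp_all add: assms)
  then show ?thesis
    by (subst poly_mapping_expansion) simp
qed

abbreviation monomial_of :: "(sl2b \<times> 'b) list \<Rightarrow> (sl2b \<times> 'b) \<Rightarrow>\<^sub>0 nat" where
  "monomial_of xs \<equiv> sum_list (map (\<lambda>v. Poly_Mapping.single v 1) xs)"

lemma lookup_monomial_of: "Poly_Mapping.lookup (monomial_of xs) v = count (mset xs) v"
  by (induct xs) (simp_all add: lookup_add lookup_single when_def)

lemma Mon_monomial_of: "Mon (monomial_of xs) = (prod_list (map Var xs) :: ('b, 'k::field_char_0) spoly)"
  by (induct xs) (simp_all add: Mon_0 Mon_add Mon_single del: One_nat_def)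

lemma monomial_of_vars_list: "monomial_of (vars_list m) = m"
proof -
  have "finite {v. 0 < Poly_Mapping.lookup m v}"
    using finite_keys[of m] by (simp add: in_keys_iff[symmetric])
  moreover obtain xs where "mset xs = Abs_multiset (Poly_Mapping.lookup m)"
    using ex_mset by blast
  ultimately have "monomial_of xs = m"
    by (intro poly_mapping_eqI) (simp add: lookup_monomial_of count_Abs_multiset del: One_nat_def)
  then show ?thesis
    unfolding vars_list_def by (rule someI)
qed

lemma mset_vars_list_monomial_of: "mset (vars_list (monomial_of xs)) = mset xs"
  by (rule multiset_eqI) (metis lookup_monomial_of monomial_of_vars_list)

lemma Mon_eq_prod_Var: "Mon m = (prod_list (map Var (vars_list m)) :: ('b, 'k::field_char_0) spoly)"
  by (metis Mon_monomial_of monomial_of_vars_list)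

lemma phi_zero [simp]: "phi 0 = (\<lambda>_. 0)"
  by (simp add: phi_def)

lemma phi_add: "phi (p + q) = (\<lambda>w. phi p w + phi q w)"
proof
  fix w
  show "phi (p + q) w = phi p w + phi q w"
    unfolding phi_def
    by (rule setsum_keys_plus_distrib[where f = "\<lambda>m a. a * phi_list (vars_list m) w"])
      (simp_all add: distrib_right)
qed

lemma phi_single: "phi (Poly_Mapping.single m c) = (\<lambda>w. c * phi_list (vars_list m) w)"
  by (simp add: phi_def)

lemma phi_Const_mult: "phi (Const c * p) = (\<lambda>w. c * phi p w)"
  by (induct p rule: poly_mapping_induct)
    (simp_all add: Const_mult_single phi_single phi_add distrib_left mult.assoc)

lemma phi_uminus: "phi (- p) = (\<lambda>w. - phi p w)"
  using phi_Const_mult[of "-1" p] by (simp add: Const_uminus)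

lemma phi_diff: "phi (p - q) = (\<lambda>w. phi p w - phi q w)"
  using phi_add[of p "- q"] by (simp add: phi_uminus)

lemma phi_sum: "phi (sum f A) = (\<lambda>w. \<Sum>x\<in>A. phi (f x) w)"
  by (induct A rule: infinite_finite_induct) (simp_all add: phi_add)

lemma phi_list_swap_pair: "phi_list [a, b] = (phi_list [b, a] :: ('b, 'k::field_char_0) wvec)"
proof -
  obtain u1 b1 u2 b2 where "a = (u1, b1)" "b = (u2, b2)"
    by fastforce
  then show ?thesis
    by (auto simp: fun_eq_iff Kf_commute[of u1 u2] brk_anticommute[of u1 u2] symt_def wedge2_def
      algebra_simps split: widx.split)
qed

lemma phi_list_swap12: "phi_list [a, b, c] = (phi_list [b, a, c] :: ('b, 'k::field_char_0) wvec)"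
proof -
  obtain u1 b1 u2 b2 u3 b3 where "a = (u1, b1)" "b = (u2, b2)" "c = (u3, b3)"
    by (metis surj_pair)
  then show ?thesis
    by (auto simp: fun_eq_iff Kbr_swap12[of u1 u2] wedge3_def algebra_simps split: widx.split)
qed

lemma phi_list_swap23: "phi_list [a, b, c] = (phi_list [a, c, b] :: ('b, 'k::field_char_0) wvec)"
proof -
  obtain u1 b1 u2 b2 u3 b3 where "a = (u1, b1)" "b = (u2, b2)" "c = (u3, b3)"
    by (metis surj_pair)
  then show ?thesis
    by (auto simp: fun_eq_iff Kbr_swap23[of u1 u2] wedge3_def algebra_simps split: widx.split)
qed

lemma phi_list_long: "length xs \<ge> 4 \<Longrightarrow> phi_list xs = (\<lambda>_. 0)"
  by (cases xs rule: phi_list.cases) auto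

lemma mset_eq_pair: "mset [a, b] = mset ys \<Longrightarrow> ys = [a, b] \<or> ys = [b, a]"
proof -
  assume eq: "mset [a, b] = mset ys"
  then obtain p q where "ys = [p, q]"
    using mset_eq_length[OF eq] by (metis length_0_conv length_Suc_conv numeral_2_eq_2)
  then show ?thesis
    using eq by (auto simp: add_eq_conv_ex)
qed

lemma mset_eq_triple: "mset [a, b, c] = mset ys \<Longrightarrow>
  ys = [a, b, c] \<or> ys = [a, c, b] \<or> ys = [b, a, c] \<or> ys = [b, c, a] \<or> ys = [c, a, b] \<or> ys = [c, b, a]"
proof -
  assume eq: "mset [a, b, c] = mset ys"
  then obtain p q r where "ys = [p, q, r]"
    using mset_eq_length[OF eq] by (metis length_0_conv length_Suc_conv numeral_3_eq_3)
  then show ?thesis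
    using eq by (auto simp: add_eq_conv_ex)
qed

lemma phi_list_mset_eq:
  assumes "mset xs = mset ys"
  shows "phi_list xs = (phi_list ys :: ('b, 'k::field_char_0) wvec)"
proof (cases xs rule: phi_list.cases)
  case 1
  then show ?thesis using assms by simp
next
  case (2 u b)
  then show ?thesis using assms by simp
next
  case (3 u1 b1 u2 b2)
  then show ?thesis
    using assms mset_eq_pair phi_list_swap_pair by metis
next
  case (4 u1 b1 u2 b2 u3 b3)
  then show ?thesis
    using assms mset_eq_triple phi_list_swap12 phi_list_swap23 by metis
next
  case (5 a b c d rest)
  then have "length xs \<ge> 4" "length ys \<ge> 4"
    using mset_eq_length[OF assms] by simp_all
  then show ?thesis
    by (simp add: phi_list_long)
qed

lemma phi_prod_Var: "phi (prod_list (map Var xs) :: ('b, 'k::field_char_0) spoly) = phi_list xs"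
proof -
  have "phi (prod_list (map Var xs) :: ('b, 'k) spoly) = phi_list (vars_list (monomial_of xs))"
    by (simp add: Mon_monomial_of[symmetric] Mon_def phi_single del: One_nat_def)
  also have "\<dots> = phi_list xs"
    by (rule phi_list_mset_eq) (rule mset_vars_list_monomial_of)
  finally show ?thesis .
qed

lemma phi_Mon: "phi (Mon m) = phi_list (vars_list m)"
  by (simp add: Mon_def phi_single)

section \<open>The sl2-action and the relation module\<close>

lemma act_Mon:
  "act X (Mon m) = (\<Sum>v\<in>Poly_Mapping.keys m.
     Const (of_nat (Poly_Mapping.lookup m v)) * Mon (m - Poly_Mapping.single v 1) * adVar X v)"
  by (simp add: act_def Mon_def)

lemma act_eq_sum_Mon: "act X p = (\<Sum>m\<in>Poly_Mapping.keys p. Const (Poly_Mapping.lookup p m) * act X (Mon m))"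
  unfolding act_Mon by (simp add: act_def Const_mult sum_distrib_left mult.assoc)

lemma act_zero [simp]: "act X 0 = 0"
  by (simp add: act_def)

lemma act_add: "act X (p + q) = act X p + act X q"
  unfolding act_eq_sum_Mon[of X "p + q"] act_eq_sum_Mon[of X p] act_eq_sum_Mon[of X q]
  by (rule setsum_keys_plus_distrib) (simp_all add: Const_add distrib_right)

lemma act_Const_mult: "act X (Const c * p) = Const c * act X p"
proof (induct p rule: poly_mapping_induct)
  case (single m d)
  then show ?case
    by (simp add: Const_mult_single act_eq_sum_Mon[of X "Poly_Mapping.single _ _"] Const_mult mult.assoc)
qed (simp_all add: act_add distrib_left)

lemma act_uminus: "act X (- p) = - act X p"
  using act_Const_mult[of X "-1" p] by (simp add: Const_uminus)

lemma act_diff: "act X (p - q) = act X p - act X q"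
  using act_add[of X p "- q"] by (simp add: act_uminus)

lemma act_numeral_mult: "act X (numeral n * p) = numeral n * act X p"
  using act_Const_mult[of X "numeral n" p] by simp

lemma act_Var_mult_Var:
  "act X (Var a * Var b) = adVar X a * Var b + Var a * (adVar X b :: ('b, 'k::field_char_0) spoly)"
proof (cases "a = b")
  case True
  have m: "Var b * Var b = (Mon (Poly_Mapping.single b 2) :: ('b, 'k) spoly)"
    by (simp only: one_add_one[symmetric] single_add Mon_add Mon_single)
  have d: "Poly_Mapping.single b 2 - Poly_Mapping.single b 1 = Poly_Mapping.single b (1::nat)"
    by (simp add: single_diff[symmetric])
  have "act X (Mon (Poly_Mapping.single b 2)) = Const 2 * Mon (Poly_Mapping.single b 1) * (adVar X b :: ('b, 'k) spoly)"
    by (simp add: act_Mon d del: One_nat_def)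
  then show ?thesis
    unfolding True m by (simp add: Mon_single algebra_simps del: One_nat_def)
next
  case False
  let ?m = "Poly_Mapping.single a 1 + Poly_Mapping.single b (1::nat)"
  have "Poly_Mapping.keys ?m = {a, b}"
    using False by (auto simp: in_keys_iff lookup_add lookup_single when_def split: if_splits)
  moreover have "Poly_Mapping.lookup ?m a = 1" "Poly_Mapping.lookup ?m b = 1"
    using False by (simp_all add: lookup_add lookup_single when_def)
  ultimately have "act X (Mon ?m) =
      (Mon (Poly_Mapping.single b 1) * adVar X a + Mon (Poly_Mapping.single a 1) * adVar X b :: ('b, 'k) spoly)"
    using False by (simp add: act_Mon del: One_nat_def)
  moreover have "Var a * Var b = (Mon ?m :: ('b, 'k) spoly)"
    by (simp only: Mon_add Mon_single)
  ultimately show ?thesis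
    by (simp only: Mon_single algebra_simps)
qed

abbreviation ve :: "'b \<Rightarrow> ('b, 'k::field_char_0) spoly" where "ve i \<equiv> Var (E, i)"
abbreviation vf :: "'b \<Rightarrow> ('b, 'k::field_char_0) spoly" where "vf i \<equiv> Var (F, i)"
abbreviation vh :: "'b \<Rightarrow> ('b, 'k::field_char_0) spoly" where "vh i \<equiv> Var (H, i)"

lemma adVar_simps [simp]:
  "adVar E (E, i) = 0" "adVar E (F, i) = vh i" "adVar E (H, i) = -2 * ve i"
  "adVar F (E, i) = - vh i" "adVar F (F, i) = 0" "adVar F (H, i) = 2 * vf i"
  "adVar H (E, i) = 2 * ve i" "adVar H (F, i) = -2 * vf i" "adVar H (H, i) = 0"
  by (simp_all add: adVar_def sum_UNIV_sl2b Const_uminus)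

lemmas act_simps = act_Var_mult_Var act_add act_diff act_uminus act_numeral_mult

(* f^k/k! applied to e_p e_q: the weight basis of the copy of L(4) generated by e_p e_q. *)
fun L4_vec :: "nat \<Rightarrow> 'b \<Rightarrow> 'b \<Rightarrow> ('b, 'k::field_char_0) spoly" where
  "L4_vec 0 p q = ve p * ve q"
| "L4_vec (Suc k) p q = Const (1 / of_nat (Suc k)) * act F (L4_vec k p q)"

lemma L4_vec_numeral:
  "L4_vec (numeral n) p q = Const (1 / numeral n) * act F (L4_vec (pred_numeral n) p q)"
  by (simp only: numeral_eq_Suc L4_vec.simps of_nat_numeral[symmetric])

lemma L4_vec_explicit:
  fixes p q :: 'b
  shows "L4_vec 1 p q = - vh p * ve q - ve p * (vh q :: ('b, 'k::field_char_0) spoly)"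
    and "L4_vec 2 p q = vh p * vh q - vf p * ve q - ve p * (vf q :: ('b, 'k) spoly)"
    and "L4_vec 3 p q = vh p * vf q + vf p * (vh q :: ('b, 'k) spoly)"
    and "L4_vec 4 p q = vf p * (vf q :: ('b, 'k) spoly)"
proof -
  show L1: "L4_vec 1 p q = - vh p * ve q - ve p * (vh q :: ('b, 'k) spoly)"
    by (simp add: act_simps algebra_simps)
  have "L4_vec 2 p q = Const (1 / 2) * act F (L4_vec 1 p q :: ('b, 'k) spoly)"
    by (simp add: L4_vec_numeral)
  also have "act F (L4_vec 1 p q) = 2 * (vh p * vh q - vf p * ve q - ve p * (vf q :: ('b, 'k) spoly))"
    unfolding L1 by (simp add: act_simps algebra_simps)
  finally show L2: "L4_vec 2 p q = vh p * vh q - vf p * ve q - ve p * (vf q :: ('b, 'k) spoly)"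
    by (simp only: Const_inverse_mult_cancel)
  have "L4_vec 3 p q = Const (1 / 3) * act F (L4_vec 2 p q :: ('b, 'k) spoly)"
    by (simp add: L4_vec_numeral)
  also have "act F (L4_vec 2 p q) = 3 * (vh p * vf q + vf p * (vh q :: ('b, 'k) spoly))"
    unfolding L2 by (simp add: act_simps algebra_simps)
  finally show L3: "L4_vec 3 p q = vh p * vf q + vf p * (vh q :: ('b, 'k) spoly)"
    by (simp only: Const_inverse_mult_cancel)
  have "L4_vec 4 p q = Const (1 / 4) * act F (L4_vec 3 p q :: ('b, 'k) spoly)"
    by (simp add: L4_vec_numeral)
  also have "act F (L4_vec 3 p q) = 4 * (vf p * (vf q :: ('b, 'k) spoly))"
    unfolding L3 by (simp add: act_simps algebra_simps)
  finally show "L4_vec 4 p q = vf p * (vf q :: ('b, 'k) spoly)"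
    by (simp only: Const_inverse_mult_cancel)
qed

lemma L4_vec_vanish: "4 < k \<Longrightarrow> L4_vec k p q = (0 :: ('b, 'k::field_char_0) spoly)"
proof (induct k)
  case (Suc k)
  then consider "k = 4" | "4 < k"
    by linarith
  then show ?case
  proof cases
    case 1
    have "act F (vf p * vf q) = (0 :: ('b, 'k) spoly)"
      by (simp add: act_Var_mult_Var)
    then show ?thesis
      unfolding 1 L4_vec.simps(2) L4_vec_explicit(4) by simp
  next
    case 2
    then show ?thesis
      using Suc by simp
  qed
qed simp

(* Proofs by these cases simp with "del: One_nat_def": otherwise L4_vec 1 becomes L4_vec (Suc 0)
   and no longer matches L4_vec_explicit. *)
lemma L4_vec_cases:
  fixes k :: nat and p q :: 'b
  obtains "k = 0" | "k = 1" | "k = 2" | "k = 3" | "k = 4" | "L4_vec k p q = (0 :: ('b, 'k::field_char_0) spoly)"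
  using L4_vec_vanish[of k p q] by fastforce

lemma act_F_L4_vec: "act F (L4_vec k p q) = Const (of_nat (Suc k)) * L4_vec (Suc k) p q"
  by (simp add: mult.assoc[symmetric] Const_mult[symmetric] del: of_nat_Suc)

lemma act_L4_vec:
  fixes p q :: 'b
  shows "act E (L4_vec 0 p q) = (0 :: ('b, 'k::field_char_0) spoly)"
    and "act E (L4_vec 1 p q) = 4 * (L4_vec 0 p q :: ('b, 'k) spoly)"
    and "act E (L4_vec 2 p q) = 3 * (L4_vec 1 p q :: ('b, 'k) spoly)"
    and "act E (L4_vec 3 p q) = 2 * (L4_vec 2 p q :: ('b, 'k) spoly)"
    and "act E (L4_vec 4 p q) = (L4_vec 3 p q :: ('b, 'k) spoly)"
    and "act H (L4_vec 0 p q) = 4 * (L4_vec 0 p q :: ('b, 'k) spoly)"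
    and "act H (L4_vec 1 p q) = 2 * (L4_vec 1 p q :: ('b, 'k) spoly)"
    and "act H (L4_vec 2 p q) = (0 :: ('b, 'k) spoly)"
    and "act H (L4_vec 3 p q) = -2 * (L4_vec 3 p q :: ('b, 'k) spoly)"
    and "act H (L4_vec 4 p q) = -4 * (L4_vec 4 p q :: ('b, 'k) spoly)"
  unfolding L4_vec_explicit L4_vec.simps(1) by (simp_all add: act_simps algebra_simps)

inductive_set L4_span :: "('b, 'k::field_char_0) spoly set" where
  L4_vec: "L4_vec k p q \<in> L4_span"
| zero: "0 \<in> L4_span"
| add: "x \<in> L4_span \<Longrightarrow> y \<in> L4_span \<Longrightarrow> x + y \<in> L4_span"
| smult: "x \<in> L4_span \<Longrightarrow> Const c * x \<in> L4_span"

lemma L4_span_numeral_mult: "x \<in> L4_span \<Longrightarrow> numeral n * x \<in> L4_span"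
  and L4_span_neg_numeral_mult: "x \<in> L4_span \<Longrightarrow> - numeral n * x \<in> L4_span"
  using L4_span.smult[of x "numeral n"] L4_span.smult[of x "- numeral n"] by (simp_all add: Const_uminus)

lemma act_L4_vec_in_L4_span: "act X (L4_vec k p q) \<in> L4_span"
proof (cases X)
  case F
  then show ?thesis
    by (simp only: act_F_L4_vec L4_span.intros)
next
  case E
  consider "k = 0" | "k = 1" | "k = 2" | "k = 3" | "k = 4" | "4 < k"
    by linarith
  then show ?thesis
    by cases (simp_all only: E act_L4_vec L4_vec_vanish act_zero L4_span.intros L4_span_numeral_mult mult_1)
next
  case H
  consider "k = 0" | "k = 1" | "k = 2" | "k = 3" | "k = 4" | "4 < k"
    by linarith
  then show ?thesis
    by cases (simp_all only: H act_L4_vec L4_vec_vanish act_zero L4_span.intros L4_span_numeral_mult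
      L4_span_neg_numeral_mult)
qed

lemma act_L4_span: "x \<in> L4_span \<Longrightarrow> act X x \<in> L4_span"
  by (induct x rule: L4_span.induct)
    (simp_all add: act_L4_vec_in_L4_span act_add act_Const_mult L4_span.intros)

lemma tkk_rel_module_subset_L4_span: "x \<in> tkk_rel_module \<Longrightarrow> x \<in> L4_span"
proof (induct x rule: tkk_rel_module.induct)
  case (gen i j)
  then show ?case
    using L4_span.L4_vec[of 0 i j] by simp
qed (simp_all add: act_L4_span L4_span.intros)

lemma L4_vec_in_tkk_rel_module: "L4_vec k p q \<in> tkk_rel_module"
  by (induct k) (simp_all add: tkk_rel_module.intros)

declare L4_vec.simps(2) [simp del]

section \<open>The ideal lies in the kernel\<close>

lemma phi_prod_Var_mult_Var_mult_Var:
  "phi (prod_list (map Var xs) * (Var a * Var b) :: ('b, 'k::field_char_0) spoly) = phi_list (xs @ [a, b])"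
  using phi_prod_Var[of "xs @ [a, b]"] by (simp add: mult.assoc)

lemma phi_Var_mult_Var: "phi (Var a * Var b :: ('b, 'k::field_char_0) spoly) = phi_list [a, b]"
  using phi_prod_Var_mult_Var_mult_Var[of "[]"] by simp

lemma phi_L4_vec: "phi (L4_vec k p q :: ('b, 'k::field_char_0) spoly) = (\<lambda>_. 0)"
  by (cases rule: L4_vec_cases[where k = k and p = p and q = q and 'k = 'k])
    (simp_all add: L4_vec_explicit phi_Var_mult_Var phi_add phi_diff phi_uminus fun_eq_iff
      split: widx.split del: One_nat_def)

lemma phi_Var_mult_L4_vec: "phi (Var v * L4_vec k p q :: ('b, 'k::field_char_0) spoly) = (\<lambda>_. 0)"
proof -
  obtain u b where v: "v = (u, b)"
    by fastforce
  have "phi (Var v * (Var a * Var c) :: ('b, 'k) spoly) = phi_list [v, a, c]" for a c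
    using phi_prod_Var_mult_Var_mult_Var[of "[v]"] by simp
  then show ?thesis
    unfolding v
    by (cases rule: L4_vec_cases[where k = k and p = p and q = q and 'k = 'k]; cases u)
      (simp_all add: L4_vec_explicit distrib_left right_diff_distrib phi_add phi_diff phi_uminus
        fun_eq_iff split: widx.split del: One_nat_def)
qed

lemma phi_long_prod_Var_mult_L4_vec:
  assumes "length xs \<ge> 2"
  shows "phi (prod_list (map Var xs) * L4_vec k p q :: ('b, 'k::field_char_0) spoly) = (\<lambda>_. 0)"
proof -
  have quartic: "phi (prod_list (map Var xs) * (Var a * Var b) :: ('b, 'k) spoly) = (\<lambda>_. 0)" for a b
    using assms by (simp add: phi_prod_Var_mult_Var_mult_Var phi_list_long)
  show ?thesis
    by (cases rule: L4_vec_cases[where k = k and p = p and q = q and 'k = 'k])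
      (simp_all add: L4_vec_explicit distrib_left right_diff_distrib phi_add phi_diff phi_uminus
        quartic del: One_nat_def)
qed

lemma phi_prod_Var_mult_L4_vec:
  "phi (prod_list (map Var xs) * L4_vec k p q :: ('b, 'k::field_char_0) spoly) = (\<lambda>_. 0)"
proof -
  have "xs = [] \<or> (\<exists>v. xs = [v]) \<or> length xs \<ge> 2"
    by (cases xs; cases "tl xs") simp_all
  then show ?thesis
    by (elim disjE exE) (simp_all add: phi_L4_vec phi_Var_mult_L4_vec phi_long_prod_Var_mult_L4_vec)
qed

lemma phi_mult_L4_vec: "phi (r * L4_vec k p q :: ('b, 'k::field_char_0) spoly) = (\<lambda>_. 0)"
proof (induct r rule: poly_mapping_induct)
  case (single m c)
  then show ?case
    by (simp add: single_eq_Const_mult_Mon Mon_eq_prod_Var mult.assoc phi_Const_mult phi_prod_Var_mult_L4_vec)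
qed (simp_all add: distrib_right phi_add)

lemma phi_mult_L4_span: "x \<in> L4_span \<Longrightarrow> phi (r * x) = (\<lambda>_. 0)"
proof (induct x arbitrary: r rule: L4_span.induct)
  case (smult x c)
  then show ?case
    by (simp add: mult.left_commute[of r] phi_Const_mult)
qed (simp_all add: phi_mult_L4_vec distrib_left phi_add)

lemma phi_tkk_ideal:
  assumes "p \<in> tkk_ideal"
  shows "phi p = (\<lambda>_. 0)"
proof -
  have "phi (r * p) = (\<lambda>_. 0)" for r
    using assms unfolding tkk_ideal_def
  proof (induct p arbitrary: r rule: ideal_gen.induct)
    case (gen g)
    then show ?case
      by (simp add: phi_mult_L4_span tkk_rel_module_subset_L4_span)
  next
    case (add p q)
    then show ?case
      by (simp add: distrib_left phi_add)
  next
    case (mult p s)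
    then show ?case
      by (simp add: mult.assoc[symmetric])
  qed simp
  from this[of 1] show ?thesis
    by simp
qed

lemma phi_list_in_Wspace: "phi_list xs \<in> (Wspace :: ('b, 'k::field_char_0) wvec set)"
proof (cases xs rule: phi_list.cases)
  case (3 u1 b1 u2 b2)
  then show ?thesis
    by (simp add: Wspace_def symt_def wedge2_def algebra_simps)
next
  case (4 u1 b1 u2 b2 u3 b3)
  then show ?thesis
    by (simp add: Wspace_def wedge3_def algebra_simps)
qed (auto simp: Wspace_def)

lemma Wspace_zero: "(\<lambda>_. 0) \<in> Wspace"
  by (simp add: Wspace_def)

lemma Wspace_add: "v \<in> Wspace \<Longrightarrow> w \<in> Wspace \<Longrightarrow> (\<lambda>x. v x + w x) \<in> Wspace"
  unfolding Wspace_def mem_Collect_eq by (metis minus_add_distrib)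

lemma Wspace_scale: "v \<in> Wspace \<Longrightarrow> (\<lambda>x. c * v x) \<in> Wspace"
  unfolding Wspace_def mem_Collect_eq by (metis mult_minus_right)

lemma phi_in_Wspace: "phi p \<in> Wspace"
  by (induct p rule: poly_mapping_induct)
    (simp_all add: Wspace_zero Wspace_add Wspace_scale phi_add phi_single phi_list_in_Wspace)

lemma dlt_commute: "dlt i j = dlt j i"
  by (simp add: dlt_def)

lemma mult_dlt: "x * dlt i j = (if i = j then x else 0)"
  by (simp add: dlt_def)

lemma sum2_dlt:
  fixes i j :: "'b::finite"
  shows "(\<Sum>a\<in>UNIV. \<Sum>b\<in>UNIV. g a b * dlt a i * dlt b j) = (g i j :: 'k::field_char_0)"
  by (simp add: mult_dlt)

lemma sum3_dlt:
  fixes i j l :: "'b::finite"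
  shows "(\<Sum>a\<in>UNIV. \<Sum>b\<in>UNIV. \<Sum>c\<in>UNIV. g a b c * dlt a i * dlt b j * dlt c l) =
    (g i j l :: 'k::field_char_0)"
  by (simp add: mult_dlt)

lemma sum2_Const_dlt:
  fixes i j :: "'b::finite"
  shows "(\<Sum>a\<in>UNIV. \<Sum>b\<in>UNIV. Const (c * (dlt i a * dlt j b)) * G a b) =
    (Const c * G i j :: ('c, 'k::field_char_0) spoly)"
proof -
  have "Const (c * (dlt i a * dlt j b)) * G a b = (if b = j then if a = i then Const c * G a b else 0 else 0)" for a b
    by (simp add: dlt_def)
  then show ?thesis
    by simp
qed

lemma sum3_Const_dlt:
  fixes i j l :: "'b::finite"
  shows "(\<Sum>a\<in>UNIV. \<Sum>b\<in>UNIV. \<Sum>d\<in>UNIV. Const (c * (dlt i a * dlt j b * dlt l d)) * G a b d) =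
    (Const c * G i j l :: ('c, 'k::field_char_0) spoly)"
proof -
  have "Const (c * (dlt i a * dlt j b * dlt l d)) * G a b d =
      (if d = l then if b = j then if a = i then Const c * G a b d else 0 else 0 else 0)" for a b d
    by (simp add: dlt_def)
  then show ?thesis
    by simp
qed

lemma sum_symt:
  fixes i j :: "'b::finite"
  shows "(\<Sum>a\<in>UNIV. \<Sum>b\<in>UNIV. g a b * symt a b i j) = (g i j + g j i) / (2 :: 'k::field_char_0)"
proof -
  have "g a b * symt a b i j = g a b / 2 * dlt a i * dlt b j + g a b / 2 * dlt a j * dlt b i" for a b
    by (simp add: symt_def dlt_commute field_simps)
  then have "(\<Sum>a\<in>UNIV. \<Sum>b\<in>UNIV. g a b * symt a b i j) =
      (\<Sum>a\<in>UNIV. \<Sum>b\<in>UNIV. g a b / 2 * dlt a i * dlt b j)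
    + (\<Sum>a\<in>UNIV. \<Sum>b\<in>UNIV. g a b / 2 * dlt a j * dlt b i)"
    by (simp only: sum.distrib)
  then show ?thesis
    by (simp only: sum2_dlt add_divide_distrib)
qed

lemma sum_wedge2:
  fixes i j :: "'b::finite"
  shows "(\<Sum>a\<in>UNIV. \<Sum>b\<in>UNIV. g a b * wedge2 a b i j) = (g i j - g j i :: 'k::field_char_0)"
proof -
  have "g a b * wedge2 a b i j = g a b * dlt a i * dlt b j - g a b * dlt a j * dlt b i" for a b
    by (simp add: wedge2_def dlt_commute algebra_simps)
  then have "(\<Sum>a\<in>UNIV. \<Sum>b\<in>UNIV. g a b * wedge2 a b i j) =
      (\<Sum>a\<in>UNIV. \<Sum>b\<in>UNIV. g a b * dlt a i * dlt b j)
    - (\<Sum>a\<in>UNIV. \<Sum>b\<in>UNIV. g a b * dlt a j * dlt b i)"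
    by (simp only: sum_subtractf)
  then show ?thesis
    by (simp only: sum2_dlt)
qed

lemma sum_wedge3:
  fixes i j l :: "'b::finite"
  shows "(\<Sum>a\<in>UNIV. \<Sum>b\<in>UNIV. \<Sum>c\<in>UNIV. g a b c * wedge3 a b c i j l) =
    (g i j l + g l i j + g j l i - g j i l - g i l j - g l j i :: 'k::field_char_0)"
proof -
  let ?S = "\<lambda>i j l. \<Sum>a\<in>UNIV. \<Sum>b\<in>UNIV. \<Sum>c\<in>UNIV. g a b c * dlt a i * dlt b j * dlt c l"
  have "g a b c * wedge3 a b c i j l =
      g a b c * dlt a i * dlt b j * dlt c l + g a b c * dlt a l * dlt b i * dlt c j
    + g a b c * dlt a j * dlt b l * dlt c i - g a b c * dlt a j * dlt b i * dlt c l
    - g a b c * dlt a i * dlt b l * dlt c j - g a b c * dlt a l * dlt b j * dlt c i" for a b c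
    by (simp add: wedge3_def dlt_commute algebra_simps)
  then have "(\<Sum>a\<in>UNIV. \<Sum>b\<in>UNIV. \<Sum>c\<in>UNIV. g a b c * wedge3 a b c i j l) =
      ?S i j l + ?S l i j + ?S j l i - ?S j i l - ?S i l j - ?S l j i"
    by (simp only: sum.distrib sum_subtractf)
  then show ?thesis
    by (simp only: sum3_dlt)
qed

lemma sum_Const_symt:
  fixes i j :: "'b::finite"
  shows "(\<Sum>a\<in>UNIV. \<Sum>b\<in>UNIV. Const (c * symt i j a b) * G a b) =
    (Const (c / 2) * (G i j + G j i) :: ('c, 'k::field_char_0) spoly)"
proof -
  have "Const (c * symt i j a b) * G a b =
      Const (c / 2 * (dlt i a * dlt j b)) * G a b + Const (c / 2 * (dlt j a * dlt i b)) * G a b" for a b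
  proof -
    have "c * symt i j a b = c / 2 * (dlt i a * dlt j b) + c / 2 * (dlt j a * dlt i b)"
      by (simp add: symt_def field_simps)
    then show ?thesis
      by (simp only: Const_add distrib_right)
  qed
  then have "(\<Sum>a\<in>UNIV. \<Sum>b\<in>UNIV. Const (c * symt i j a b) * G a b) =
      (\<Sum>a\<in>UNIV. \<Sum>b\<in>UNIV. Const (c / 2 * (dlt i a * dlt j b)) * G a b)
    + (\<Sum>a\<in>UNIV. \<Sum>b\<in>UNIV. Const (c / 2 * (dlt j a * dlt i b)) * G a b)"
    by (simp only: sum.distrib)
  then show ?thesis
    by (simp only: sum2_Const_dlt distrib_left)
qed

lemma sum_Const_wedge2:
  fixes i j :: "'b::finite"
  shows "(\<Sum>a\<in>UNIV. \<Sum>b\<in>UNIV. Const (c * wedge2 i j a b) * G a b) =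
    (Const c * (G i j - G j i) :: ('c, 'k::field_char_0) spoly)"
proof -
  have "Const (c * wedge2 i j a b) * G a b =
      Const (c * (dlt i a * dlt j b)) * G a b - Const (c * (dlt j a * dlt i b)) * G a b" for a b
  proof -
    have "c * wedge2 i j a b = c * (dlt i a * dlt j b) - c * (dlt j a * dlt i b)"
      by (simp add: wedge2_def algebra_simps)
    then show ?thesis
      by (simp only: Const_diff left_diff_distrib)
  qed
  then have "(\<Sum>a\<in>UNIV. \<Sum>b\<in>UNIV. Const (c * wedge2 i j a b) * G a b) =
      (\<Sum>a\<in>UNIV. \<Sum>b\<in>UNIV. Const (c * (dlt i a * dlt j b)) * G a b)
    - (\<Sum>a\<in>UNIV. \<Sum>b\<in>UNIV. Const (c * (dlt j a * dlt i b)) * G a b)"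
    by (simp only: sum_subtractf)
  then show ?thesis
    by (simp only: sum2_Const_dlt right_diff_distrib)
qed

lemma sum_Const_wedge3:
  fixes i j l :: "'b::finite"
  shows "(\<Sum>a\<in>UNIV. \<Sum>b\<in>UNIV. \<Sum>d\<in>UNIV. Const (c * wedge3 i j l a b d) * G a b d) =
    (Const c * (G i j l + G j l i + G l i j - G j i l - G i l j - G l j i) :: ('c, 'k::field_char_0) spoly)"
proof -
  let ?S = "\<lambda>i j l.
    \<Sum>a\<in>UNIV. \<Sum>b\<in>UNIV. \<Sum>d\<in>UNIV. Const (c * (dlt i a * dlt j b * dlt l d)) * G a b d"
  have "Const (c * wedge3 i j l a b d) * G a b d =
      Const (c * (dlt i a * dlt j b * dlt l d)) * G a b d + Const (c * (dlt j a * dlt l b * dlt i d)) * G a b d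
    + Const (c * (dlt l a * dlt i b * dlt j d)) * G a b d - Const (c * (dlt j a * dlt i b * dlt l d)) * G a b d
    - Const (c * (dlt i a * dlt l b * dlt j d)) * G a b d - Const (c * (dlt l a * dlt j b * dlt i d)) * G a b d"
    for a b d
  proof -
    have "c * wedge3 i j l a b d =
        c * (dlt i a * dlt j b * dlt l d) + c * (dlt j a * dlt l b * dlt i d)
      + c * (dlt l a * dlt i b * dlt j d) - c * (dlt j a * dlt i b * dlt l d)
      - c * (dlt i a * dlt l b * dlt j d) - c * (dlt l a * dlt j b * dlt i d)"
      by (simp add: wedge3_def algebra_simps)
    then show ?thesis
      by (simp only: Const_add Const_diff distrib_right left_diff_distrib)
  qed
  then have "(\<Sum>a\<in>UNIV. \<Sum>b\<in>UNIV. \<Sum>d\<in>UNIV. Const (c * wedge3 i j l a b d) * G a b d) =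
      ?S i j l + ?S j l i + ?S l i j - ?S j i l - ?S i l j - ?S l j i"
    by (simp only: sum.distrib sum_subtractf)
  then show ?thesis
    by (simp only: sum3_Const_dlt distrib_left right_diff_distrib)
qed

lemma sum_scaled_wedge2:
  fixes i j :: "'b::finite"
  shows "(\<Sum>a\<in>UNIV. \<Sum>b\<in>UNIV. g a b * (c * wedge2 a b i j)) = c * (g i j - g j i :: 'k::field_char_0)"
  by (simp only: sum_wedge2[symmetric] sum_distrib_left mult.left_commute[of c])

section \<open>A right inverse of phi on Wspace\<close>

definition phi_section :: "('b::finite, 'k::field_char_0) wvec \<Rightarrow> ('b, 'k) spoly" where
  "phi_section w = Const (w W0)
   + (\<Sum>X\<in>UNIV. \<Sum>i\<in>UNIV. Const (w (W1 X i)) * Var (X, i))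
   + (\<Sum>a\<in>UNIV. \<Sum>b\<in>UNIV. Const (w (W2S a b)) * (vh a * vh b))
   + Const (1/2) * (\<Sum>a\<in>UNIV. \<Sum>b\<in>UNIV. Const (w (W2A H a b)) * (ve a * vf b))
   + Const (1/4) * (\<Sum>a\<in>UNIV. \<Sum>b\<in>UNIV. Const (w (W2A E a b)) * (vh a * ve b))
   - Const (1/4) * (\<Sum>a\<in>UNIV. \<Sum>b\<in>UNIV. Const (w (W2A F a b)) * (vh a * vf b))
   + Const (1/6) * (\<Sum>a\<in>UNIV. \<Sum>b\<in>UNIV. \<Sum>c\<in>UNIV. Const (w (W3 a b c)) * (ve a * vf b * vh c))"

lemma phi_section_zero: "phi_section (\<lambda>_. 0) = 0"
  by (simp add: phi_section_def)

lemma phi_section_add: "phi_section (\<lambda>x. v x + w x) = phi_section v + phi_section w"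
  by (simp add: phi_section_def Const_add distrib_right sum.distrib algebra_simps)

lemma phi_section_scale: "phi_section (\<lambda>x. c * w x) = Const c * phi_section w"
  by (simp add: phi_section_def Const_mult sum_distrib_left algebra_simps)

lemma phi_Const: "phi (Const c :: ('b, 'k::field_char_0) spoly) = (\<lambda>x. c * phi_list [] x)"
  using phi_Const_mult[of c 1] by (simp add: phi_prod_Var[of "[]", simplified])

lemma phi_Var: "phi (Var v :: ('b, 'k::field_char_0) spoly) = phi_list [v]"
  using phi_prod_Var[of "[v]"] by simp

lemma phi_Var_mult_Var_mult_Var: "phi (Var a * Var b * Var c :: ('b, 'k::field_char_0) spoly) = phi_list [a, b, c]"
  using phi_prod_Var[of "[a, b, c]"] by (simp add: mult.assoc)

lemma phi_phi_section_apply: "phi (phi_section w) x =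
     w W0 * phi_list [] x
   + (\<Sum>X\<in>UNIV. \<Sum>i\<in>UNIV. w (W1 X i) * phi_list [(X, i)] x)
   + (\<Sum>a\<in>UNIV. \<Sum>b\<in>UNIV. w (W2S a b) * phi_list [(H, a), (H, b)] x)
   + 1/2 * (\<Sum>a\<in>UNIV. \<Sum>b\<in>UNIV. w (W2A H a b) * phi_list [(E, a), (F, b)] x)
   + 1/4 * (\<Sum>a\<in>UNIV. \<Sum>b\<in>UNIV. w (W2A E a b) * phi_list [(H, a), (E, b)] x)
   - 1/4 * (\<Sum>a\<in>UNIV. \<Sum>b\<in>UNIV. w (W2A F a b) * phi_list [(H, a), (F, b)] x)
   + 1/6 * (\<Sum>a\<in>UNIV. \<Sum>b\<in>UNIV. \<Sum>c\<in>UNIV. w (W3 a b c) * phi_list [(E, a), (F, b), (H, c)] x)"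
  unfolding phi_section_def
  by (simp only: phi_add phi_diff phi_Const_mult phi_sum phi_Const phi_Var phi_Var_mult_Var
    phi_Var_mult_Var_mult_Var)

lemma phi_phi_section:
  fixes w :: "('b::finite, 'k::field_char_0) wvec"
  assumes "w \<in> Wspace"
  shows "phi (phi_section w) = w"
proof
  fix x
  have sym2: "w (W2S j i) = w (W2S i j)" and anti2: "w (W2A C j i) = - w (W2A C i j)"
    and anti3: "w (W3 j i l) = - w (W3 i j l)" "w (W3 i l j) = - w (W3 i j l)" for C i j l
    using assms unfolding Wspace_def mem_Collect_eq by (metis minus_minus)+
  have W1_delta: "s * (if A \<and> B then 1 else 0) = (if B then if A then s else 0 else 0)" for A B and s :: 'k
    by simp
  note collect = phi_phi_section_apply sum_divide_distrib[symmetric] sum_symt sum_wedge2 sum_wedge3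
  show "phi (phi_section w) x = w x"
  proof (cases x)
    case (W1 X i)
    then show ?thesis
      by (simp add: phi_phi_section_apply W1_delta)
  next
    case (W2S i j)
    then show ?thesis
      using sym2[of i j] anti2[of H i j] by (simp add: collect)
  next
    case (W2A C i j)
    then show ?thesis
      using anti2[of C i j] by (cases C) (simp_all add: collect sum_scaled_wedge2 sum_negf)
  next
    case (W3 i j l)
    have "w (W3 l i j) = w (W3 i j l)" "w (W3 j l i) = w (W3 i j l)" "w (W3 j i l) = - w (W3 i j l)"
      "w (W3 i l j) = - w (W3 i j l)" "w (W3 l j i) = - w (W3 i j l)"
      using anti3 by (metis minus_minus)+
    then show ?thesis
      using W3 by (simp add: collect)
  next
    case W0
    then show ?thesis
      by (simp add: phi_phi_section_apply)
  qed
qed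

lemma range_phi: "range (phi :: ('b::finite, 'k::field_char_0) spoly \<Rightarrow> _) = Wspace"
  using phi_in_Wspace phi_phi_section by (metis image_subsetI rangeI subsetI subset_antisym)

section \<open>Every polynomial is congruent to its normal form\<close>

lemma tkk_ideal_zero: "0 \<in> tkk_ideal"
  and tkk_ideal_add: "p \<in> tkk_ideal \<Longrightarrow> q \<in> tkk_ideal \<Longrightarrow> p + q \<in> tkk_ideal"
  and tkk_ideal_mult: "p \<in> tkk_ideal \<Longrightarrow> r * p \<in> tkk_ideal"
  and L4_vec_in_tkk_ideal: "L4_vec k i j \<in> tkk_ideal"
  by (simp_all add: tkk_ideal_def ideal_gen.intros L4_vec_in_tkk_rel_module)

lemma tkk_ideal_diff: "p \<in> tkk_ideal \<Longrightarrow> q \<in> tkk_ideal \<Longrightarrow> p - q \<in> tkk_ideal"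
  using tkk_ideal_add[of p "(- 1) * q"] tkk_ideal_mult[of q "- 1"] by simp

lemmas tkk_ideal_intros = tkk_ideal_zero tkk_ideal_add tkk_ideal_diff tkk_ideal_mult L4_vec_in_tkk_ideal

(* Four times phi_section (phi_list [(X, i), (Y, j)]), scaled to clear denominators. *)
definition quadratic_nf :: "sl2b \<Rightarrow> sl2b \<Rightarrow> 'b \<Rightarrow> 'b \<Rightarrow> ('b, 'k::field_char_0) spoly" where
  "quadratic_nf X Y i j =
     Const (2 * Kf X Y) * (vh i * vh j + vh j * vh i)
   + Const (2 * brk X Y H) * (ve i * vf j - ve j * vf i)
   + Const (brk X Y E) * (vh i * ve j - vh j * ve i)
   - Const (brk X Y F) * (vh i * vf j - vh j * vf i)"

lemma phi_section_phi_list_pair: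
  "phi_section (phi_list [(X, i), (Y, j)]) = Const (1/4) * (quadratic_nf X Y i j :: ('b::finite, 'k::field_char_0) spoly)"
proof -
  have "phi_section (phi_list [(X, i), (Y, j)]) =
      Const (Kf X Y / 2) * (vh i * vh j + vh j * vh i)
    + Const (1/2) * (Const (brk X Y H) * (ve i * vf j - ve j * vf i))
    + Const (1/4) * (Const (brk X Y E) * (vh i * ve j - vh j * ve i))
    - Const (1/4) * (Const (brk X Y F) * (vh i * vf j - vh j * (vf i :: ('b, 'k) spoly)))"
    by (simp add: phi_section_def sum_Const_symt sum_Const_wedge2)
  then show ?thesis
    by (simp add: quadratic_nf_def distrib_left right_diff_distrib mult.assoc[symmetric] Const_mult[symmetric])
qed

definition alt_efh :: "'b \<Rightarrow> 'b \<Rightarrow> 'b \<Rightarrow> ('b, 'k::field_char_0) spoly" where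
  "alt_efh i j l = ve i * vf j * vh l + ve j * vf l * vh i + ve l * vf i * vh j
     - ve j * vf i * vh l - ve i * vf l * vh j - ve l * vf j * vh i"

lemma phi_section_phi_list_triple:
  "phi_section (phi_list [(X, i), (Y, j), (Z, l)]) =
     Const (1/6) * (Const (Kbr X Y Z) * (alt_efh i j l :: ('b::finite, 'k::field_char_0) spoly))"
  by (simp add: phi_section_def alt_efh_def sum_Const_wedge3)

lemma quadratic_nf_congruent:
  "4 * (Var (X, i) * Var (Y, j)) - quadratic_nf X Y i j \<in> (tkk_ideal :: ('b, 'k::field_char_0) spoly set)"
proof -
  have table:
    "4 * (ve i * ve j) - quadratic_nf E E i j = 4 * (L4_vec 0 i j :: ('b, 'k) spoly)"
    "4 * (ve i * vf j) - quadratic_nf E F i j = -2 * (L4_vec 2 i j :: ('b, 'k) spoly)"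
    "4 * (ve i * vh j) - quadratic_nf E H i j = -2 * (L4_vec 1 i j :: ('b, 'k) spoly)"
    "4 * (vf i * ve j) - quadratic_nf F E i j = -2 * (L4_vec 2 i j :: ('b, 'k) spoly)"
    "4 * (vf i * vf j) - quadratic_nf F F i j = 4 * (L4_vec 4 i j :: ('b, 'k) spoly)"
    "4 * (vf i * vh j) - quadratic_nf F H i j = 2 * (L4_vec 3 i j :: ('b, 'k) spoly)"
    "4 * (vh i * ve j) - quadratic_nf H E i j = -2 * (L4_vec 1 i j :: ('b, 'k) spoly)"
    "4 * (vh i * vf j) - quadratic_nf H F i j = 2 * (L4_vec 3 i j :: ('b, 'k) spoly)"
    "4 * (vh i * vh j) - quadratic_nf H H i j = (0 :: ('b, 'k) spoly)"
    by (simp_all add: quadratic_nf_def L4_vec_explicit Const_uminus algebra_simps del: One_nat_def)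
  show ?thesis
    by (cases X; cases Y) (simp_all only: table tkk_ideal_mult L4_vec_in_tkk_ideal tkk_ideal_zero)
qed

lemma Var_mult_Var_congruent:
  "Var a * Var b - phi_section (phi_list [a, b]) \<in> (tkk_ideal :: ('b::finite, 'k::field_char_0) spoly set)"
proof -
  obtain X i Y j where ab: "a = (X, i)" "b = (Y, j)"
    by fastforce
  have "Var a * Var b - phi_section (phi_list [a, b]) =
      Const (1/4) * (4 * (Var (X, i) * Var (Y, j)) - quadratic_nf X Y i j :: ('b, 'k) spoly)"
    unfolding ab phi_section_phi_list_pair by (simp only: right_diff_distrib Const_inverse_mult_cancel)
  then show ?thesis
    using tkk_ideal_mult[OF quadratic_nf_congruent] by metis
qed

(* 6 * (Var (X, i) * Var (Y, j) * Var (Z, l) - phi_section (phi_list [(X, i), (Y, j), (Z, l)])),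
   see phi_section_phi_list_triple. *)
definition cubic_defect ::
    "sl2b \<Rightarrow> 'b \<Rightarrow> sl2b \<Rightarrow> 'b \<Rightarrow> sl2b \<Rightarrow> 'b \<Rightarrow> ('b, 'k::field_char_0) spoly" where
  "cubic_defect X i Y j Z l = 6 * (Var (X, i) * Var (Y, j) * Var (Z, l)) - Const (Kbr X Y Z) * alt_efh i j l"

lemma cubic_defect_swap12: "cubic_defect Y j X i Z l = cubic_defect X i Y j Z l"
  by (simp add: cubic_defect_def alt_efh_def Kbr_swap12[of Y] Const_uminus algebra_simps)

lemma cubic_defect_swap23: "cubic_defect X i Z l Y j = cubic_defect X i Y j Z l"
  by (simp add: cubic_defect_def alt_efh_def Kbr_swap23[of X Z] Const_uminus algebra_simps)

lemma cubic_defect_ordered: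
  fixes i j l :: 'b
  shows
    "cubic_defect E i E j E l = 6 * ve l * L4_vec 0 i j"
    "cubic_defect E i E j F l = 6 * vf l * L4_vec 0 i j"
    "cubic_defect E i E j H l = 6 * vh l * L4_vec 0 i j"
    "cubic_defect E i F j F l = 6 * ve i * L4_vec 4 j l"
    "cubic_defect E i F j H l = - ve l * L4_vec 3 i j + 2 * vf l * L4_vec 1 i j + ve j * L4_vec 3 i l
       - 2 * vf j * L4_vec 1 i l + 3 * ve i * L4_vec 3 j l"
    "cubic_defect E i H j H l = 6 * vf l * L4_vec 0 i j + 6 * vf j * L4_vec 0 i l + 6 * ve i * L4_vec 2 j l"
    "cubic_defect F i F j F l = 6 * vf l * L4_vec 4 i j"
    "cubic_defect F i F j H l = 6 * vh l * L4_vec 4 i j"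
    "cubic_defect F i H j H l = - 6 * ve l * L4_vec 4 i j + 6 * vh l * L4_vec 3 i j - 6 * vf j * L4_vec 2 i l
       - 6 * ve i * L4_vec 4 j l"
    "cubic_defect H i H j H l = 6 * vf l * L4_vec 1 i j + 6 * vh l * L4_vec 2 i j + 6 * ve j * L4_vec 3 i l
       + 6 * ve i * (L4_vec 3 j l :: ('b, 'k::field_char_0) spoly)"
  by (simp_all add: cubic_defect_def alt_efh_def L4_vec_explicit Const_uminus algebra_simps del: One_nat_def)

lemma cubic_defect_in_tkk_ideal:
  "cubic_defect X i Y j Z l \<in> (tkk_ideal :: ('b, 'k::field_char_0) spoly set)"
proof -
  have ordered:
    "cubic_defect E i E j E l \<in> tkk_ideal" "cubic_defect E i E j F l \<in> tkk_ideal"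
    "cubic_defect E i E j H l \<in> tkk_ideal" "cubic_defect E i F j F l \<in> tkk_ideal"
    "cubic_defect E i F j H l \<in> tkk_ideal" "cubic_defect E i H j H l \<in> tkk_ideal"
    "cubic_defect F i F j F l \<in> tkk_ideal" "cubic_defect F i F j H l \<in> tkk_ideal"
    "cubic_defect F i H j H l \<in> tkk_ideal" "cubic_defect H i H j H l \<in> (tkk_ideal :: ('b, 'k) spoly set)"
    for i j l :: 'b
    unfolding cubic_defect_ordered by (intro tkk_ideal_intros)+
  show ?thesis
    by (cases X; cases Y; cases Z) (metis ordered cubic_defect_swap12 cubic_defect_swap23)+
qed

lemma Var_mult_Var_mult_Var_congruent:
  "Var a * Var b * Var c - phi_section (phi_list [a, b, c]) \<in> (tkk_ideal :: ('b::finite, 'k::field_char_0) spoly set)"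
proof -
  obtain X i Y j Z l where abc: "a = (X, i)" "b = (Y, j)" "c = (Z, l)"
    by (metis surj_pair)
  have "Var a * Var b * Var c - phi_section (phi_list [a, b, c]) =
      Const (1/6) * (cubic_defect X i Y j Z l :: ('b, 'k) spoly)"
    unfolding abc phi_section_phi_list_triple cubic_defect_def
    by (simp only: right_diff_distrib Const_inverse_mult_cancel)
  then show ?thesis
    using tkk_ideal_mult[OF cubic_defect_in_tkk_ideal] by metis
qed

lemma Var_mult_Var_mult_Var_in_tkk_ideal:
  assumes "Kbr X Y Z = (0 :: 'k::field_char_0)"
  shows "Var (X, i) * Var (Y, j) * Var (Z, l) \<in> (tkk_ideal :: ('b, 'k) spoly set)"
proof -
  have "Var (X, i) * Var (Y, j) * Var (Z, l) = Const (1/6) * (cubic_defect X i Y j Z l :: ('b, 'k) spoly)"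
    unfolding cubic_defect_def assms by (simp only: Const_0 mult_zero_left diff_zero Const_inverse_mult_cancel)
  then show ?thesis
    using tkk_ideal_mult[OF cubic_defect_in_tkk_ideal] by metis
qed

lemma quartic_in_tkk_ideal:
  "Var a * Var b * Var c * Var d \<in> (tkk_ideal :: ('b, 'k::field_char_0) spoly set)"
proof -
  obtain X i Y j Z l W m where abcd: "a = (X, i)" "b = (Y, j)" "c = (Z, l)" "d = (W, m)"
    by (metis surj_pair)
  have cubic: "Var (A, p) * Var (B, q) * Var (C, r) * s \<in> (tkk_ideal :: ('b, 'k) spoly set)"
    if "Kbr A B C = (0 :: 'k)" for A B C p q r s
    using tkk_ideal_mult[OF Var_mult_Var_mult_Var_in_tkk_ideal[OF that], of s] by (simp add: mult.commute)
  have "Kbr X Y Z = (0 :: 'k) \<or> Kbr X Y W = (0 :: 'k) \<or> Kbr X Z W = (0 :: 'k) \<or> Kbr Y Z W = (0 :: 'k)"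
    by (cases X; cases Y; cases Z; cases W) simp_all
  then show ?thesis
    unfolding abcd
    using cubic[of X Y Z i j l "Var (W, m)"] cubic[of X Y W i j m "Var (Z, l)"]
      cubic[of X Z W i l m "Var (Y, j)"] cubic[of Y Z W j l m "Var (X, i)"]
    by (auto simp: mult_ac)
qed

lemma phi_section_phi_list_Nil: "phi_section (phi_list []) = (1 :: ('b::finite, 'k::field_char_0) spoly)"
  by (simp add: phi_section_def)

lemma phi_section_phi_list_single: "phi_section (phi_list [v]) = (Var v :: ('b::finite, 'k::field_char_0) spoly)"
proof -
  obtain X i where v: "v = (X, i)"
    by fastforce
  have "Const (if Y = X \<and> j = i then 1 else 0) * Var (Y, j) =
      (if i = j then if X = Y then Var (X, i) else 0 else (0 :: ('b, 'k) spoly))" for Y j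
    by auto
  then show ?thesis
    unfolding v by (simp add: phi_section_def)
qed

lemma prod_Var_congruent:
  "prod_list (map Var xs) - phi_section (phi_list xs) \<in> (tkk_ideal :: ('b::finite, 'k::field_char_0) spoly set)"
proof (cases xs rule: phi_list.cases)
  case 1
  then show ?thesis
    by (simp add: phi_section_phi_list_Nil tkk_ideal_zero del: phi_list.simps)
next
  case (2 u b)
  then show ?thesis
    by (simp add: phi_section_phi_list_single tkk_ideal_zero del: phi_list.simps)
next
  case (3 u1 b1 u2 b2)
  then show ?thesis
    using Var_mult_Var_congruent by (simp del: phi_list.simps)
next
  case (4 u1 b1 u2 b2 u3 b3)
  then show ?thesis
    using Var_mult_Var_mult_Var_congruent by (simp add: mult.assoc del: phi_list.simps)
next
  case (5 a b c d rest)
  then have "prod_list (map Var xs) = prod_list (map Var rest) * (Var a * Var b * Var c * (Var d :: ('b, 'k) spoly))"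
    by (simp add: mult_ac)
  moreover have "phi_list xs = (\<lambda>_. 0 :: 'k)"
    using 5 by simp
  ultimately show ?thesis
    using tkk_ideal_mult[OF quartic_in_tkk_ideal] by (simp add: phi_section_zero)
qed

lemma congruent_phi_section_phi:
  "p - phi_section (phi p) \<in> (tkk_ideal :: ('b::finite, 'k::field_char_0) spoly set)"
proof (induct p rule: poly_mapping_induct)
  case zero
  then show ?case
    by (simp add: phi_section_zero tkk_ideal_zero)
next
  case (single m c)
  have "Poly_Mapping.single m c - phi_section (phi (Poly_Mapping.single m c)) =
      Const c * (Mon m - phi_section (phi (Mon m)) :: ('b, 'k) spoly)"
    by (simp add: single_eq_Const_mult_Mon phi_Const_mult phi_section_scale right_diff_distrib)
  then show ?case
    using tkk_ideal_mult[OF prod_Var_congruent[of "vars_list m"]]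
    by (simp add: Mon_eq_prod_Var[symmetric] phi_Mon[symmetric])
next
  case (add p q)
  have "p + q - phi_section (phi (p + q)) = (p - phi_section (phi p)) + (q - phi_section (phi q))"
    by (simp add: phi_add phi_section_add)
  then show ?case
    using add tkk_ideal_add by metis
qed

theorem proposition3p2:
  shows "range (phi :: ('b::finite, 'k::field_char_0) spoly \<Rightarrow> _) = Wspace
       \<and> (\<forall>p :: ('b, 'k) spoly. phi p = (\<lambda>_. 0) \<longleftrightarrow> p \<in> tkk_ideal)"
proof (intro conjI allI iffI)
  show "range (phi :: ('b, 'k) spoly \<Rightarrow> _) = Wspace"
    by (rule range_phi)
next
  fix p :: "('b, 'k) spoly"
  assume "phi p = (\<lambda>_. 0)"
  then show "p \<in> tkk_ideal"
    using congruent_phi_section_phi[of p] by (simp add: phi_section_zero)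
next
  fix p :: "('b, 'k) spoly"
  assume "p \<in> tkk_ideal"
  then show "phi p = (\<lambda>_. 0)"
    by (rule phi_tkk_ideal)
qed

end
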